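(* Let $\phi:\mathbb{R}^2\to[-\infty,0]$ be a Borel function. Then $\phi\le\phi_G$ for some $G\in\mathfrak{M}$ if and only if $$(1-t)\phi(y^0)+t\,\phi(y^1)\le t(1-t)\,c(y^0,y^1),\qquad y^0,y^1\in\mathbb{R}^2,\ t\in[0,1].$$ The set of such functions $\phi$ is convex.
   Context: $c(x,y)=(x_1-y_1)(x_2-y_2)$ for $x,y\in\mathbb{R}^2$. $\mathfrak{M}$: family of maximal monotone sets $G\subset\mathbb{R}^2$ (monotone: $c(r,s)\ge0$ for all $r,s\in G$; maximal: not a proper subset of a monotone set). $\phi_G(y)=\inf_{x\in G}c(x,y)$. *)

theory Defs
  imports "HOL-Analysis.Analysis"
begin

definition cst :: "real \<times> real \<Rightarrow> real \<times> real \<Rightarrow> real" where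
  "cst x y = (fst x - fst y) * (snd x - snd y)"

definition monotone_set :: "(real \<times> real) set \<Rightarrow> bool" where
  "monotone_set G \<longleftrightarrow> (\<forall>r\<in>G. \<forall>s\<in>G. cst r s \<ge> 0)"

definition maximal_monotone :: "(real \<times> real) set \<Rightarrow> bool" where
  "maximal_monotone G \<longleftrightarrow> monotone_set G \<and> (\<forall>H. monotone_set H \<and> G \<subseteq> H \<longrightarrow> H = G)"

definition phiG :: "(real \<times> real) set \<Rightarrow> real \<times> real \<Rightarrow> ereal" where
  "phiG G y = (INF x\<in>G. ereal (cst x y))"

definition dominated_set :: "(real \<times> real \<Rightarrow> ereal) set" where
  "dominated_set = {\<phi>. \<phi> \<in> borel_measurable borel \<and> (\<forall>y. \<phi> y \<le> 0) \<and>
      (\<exists>G. maximal_monotone G \<and> (\<forall>y. \<phi> y \<le> phiG G y))}"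

end

theory Submission
  imports Defs
begin

(*
  In the coordinates u = x1 + x2, v = x2 - x1 the cost becomes
  c(x, y) = ((u x - u y)^2 - (v x - v y)^2) / 4, and the graph v = g(u) of any
  1-Lipschitz function g is maximal monotone.

  Necessity: by maximality some x in G has c(x, y_t) <= 0 at y_t = (1-t) y0 + t y1,
  and (1-t) c(x, y0) + t c(x, y1) = c(x, y_t) + t(1-t) c(y0, y1).

  Sufficiency: phi <= phi_G for the graph of g means |g(w) - v y| <= R_y(w) with
  R_y(w) = sqrt((w - u y)^2 - 4 phi(y)) wherever phi(y) is finite. Optimising the
  condition over t gives v y - R_y <= v y' + R_y' for all y, y'; the functions
  v y - R_y are 1-Lipschitz, so their supremum is such a g.

  Convexity: for 0 < a < 1 the combination a phi1 + (1-a) phi2 is finite exactly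
  where both phi1 and phi2 are, and there the condition is linear in phi.
*)

lemma cst_commute: "cst x y = cst y x"
  unfolding cst_def by (simp add: algebra_simps)

lemma cst_self [simp]: "cst x x = 0"
  unfolding cst_def by simp

lemma cst_convex_combination:
  "(1 - t) * cst x y0 + t * cst x y1 = cst x ((1 - t) *\<^sub>R y0 + t *\<^sub>R y1) + t * (1 - t) * cst y0 y1"
  unfolding cst_def by (simp add: algebra_simps)

definition rot_u :: "real \<times> real \<Rightarrow> real" where
  "rot_u y = fst y + snd y"

definition rot_v :: "real \<times> real \<Rightarrow> real" where
  "rot_v y = snd y - fst y"

lemma cst_rot: "4 * cst a b = (rot_u a - rot_u b)\<^sup>2 - (rot_v a - rot_v b)\<^sup>2"
  unfolding cst_def rot_u_def rot_v_def by (simp add: power2_eq_square algebra_simps)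

definition rot_graph :: "(real \<Rightarrow> real) \<Rightarrow> (real \<times> real) set" where
  "rot_graph g = {x. rot_v x = g (rot_u x)}"

lemma rot_u_half_Pair: "rot_u ((w - v) / 2, (w + v) / 2) = w"
  unfolding rot_u_def by (simp add: field_simps)

lemma half_Pair_mem_rot_graph: "((w - g w) / 2, (w + g w) / 2) \<in> rot_graph g"
  unfolding rot_graph_def rot_u_def rot_v_def by (simp add: field_simps)

lemma monotone_set_insert:
  assumes "monotone_set G" "\<And>x. x \<in> G \<Longrightarrow> 0 \<le> cst x y"
  shows "monotone_set (insert y G)"
  using assms cst_commute unfolding monotone_set_def by (metis cst_self insert_iff order_refl)

lemma maximal_monotone_ex_cst_nonpos:
  assumes "maximal_monotone G"
  shows "\<exists>x\<in>G. cst x y \<le> 0"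
proof (rule ccontr)
  assume "\<not> ?thesis"
  then have pos: "\<forall>x\<in>G. 0 < cst x y"
    by (simp add: not_le)
  then have "monotone_set (insert y G)"
    using assms by (intro monotone_set_insert) (auto simp: maximal_monotone_def less_imp_le)
  then have "y \<in> G"
    using assms unfolding maximal_monotone_def by blast
  with pos show False by fastforce
qed

lemma phiG_le_cst: "x \<in> G \<Longrightarrow> phiG G y \<le> ereal (cst x y)"
  unfolding phiG_def by (rule INF_lower)

lemma maximal_monotone_rot_graph:
  assumes "1-lipschitz_on UNIV g"
  shows "maximal_monotone (rot_graph g)"
proof -
  have lip: "(g w - g w')\<^sup>2 \<le> (w - w')\<^sup>2" for w w'
    using lipschitz_onD[OF assms, of w w'] by (simp add: dist_real_def abs_le_square_iff)
  have mono: "monotone_set (rot_graph g)"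
    unfolding monotone_set_def
  proof (intro ballI)
    fix r s
    assume "r \<in> rot_graph g" "s \<in> rot_graph g"
    then have "0 \<le> 4 * cst r s"
      using lip[of "rot_u r" "rot_u s"] unfolding cst_rot rot_graph_def by simp
    then show "0 \<le> cst r s" by simp
  qed
  have "z \<in> rot_graph g" if "monotone_set H" "rot_graph g \<subseteq> H" "z \<in> H" for H z
  proof -
    define x where "x = ((rot_u z - g (rot_u z)) / 2, (rot_u z + g (rot_u z)) / 2)"
    have x: "x \<in> rot_graph g" "rot_u x = rot_u z"
      unfolding x_def by (rule half_Pair_mem_rot_graph, rule rot_u_half_Pair)
    then have "0 \<le> 4 * cst z x"
      using that unfolding monotone_set_def by auto
    then have "rot_v z = rot_v x"
      unfolding cst_rot x(2) by simp
    with x show ?thesis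
      unfolding rot_graph_def by simp
  qed
  with mono show ?thesis
    unfolding maximal_monotone_def by blast
qed

lemma le_of_one_minus_mult_le:
  fixes K \<beta> :: real
  assumes "\<And>t. 0 < t \<Longrightarrow> t \<le> 1 \<Longrightarrow> (1 - t) * K \<le> \<beta>"
  shows "K \<le> \<beta>"
proof (rule tendsto_upperbound)
  show "((\<lambda>t. (1 - t) * K) \<longlongrightarrow> K) (at_right 0)"
    by (intro tendsto_eq_intros) auto
  show "\<forall>\<^sub>F t in at_right 0. (1 - t) * K \<le> \<beta>"
    using eventually_at_right_real[OF zero_less_one] by (elim eventually_mono) (auto intro: assms)
qed simp

lemma le_sum_squared_of_interpolation_bound:
  fixes A B K :: real
  assumes "0 \<le> A" "0 \<le> B"
    and bound: "\<And>t. 0 \<le> t \<Longrightarrow> t \<le> 1 \<Longrightarrow> t * (1 - t) * K \<le> (1 - t) * A\<^sup>2 + t * B\<^sup>2"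
  shows "K \<le> (A + B)\<^sup>2"
proof -
  consider "A = 0" | "B = 0" | "0 < A" "0 < B"
    using assms(1,2) by linarith
  then show ?thesis
  proof cases
    case 1
    have "K \<le> B\<^sup>2"
    proof (rule le_of_one_minus_mult_le)
      fix t :: real
      assume "0 < t" "t \<le> 1"
      then show "(1 - t) * K \<le> B\<^sup>2"
        using bound[of t] 1 by (simp add: mult.assoc)
    qed
    with 1 show ?thesis by simp
  next
    case 2
    have "K \<le> A\<^sup>2"
    proof (rule le_of_one_minus_mult_le)
      fix t :: real
      assume "0 < t" "t \<le> 1"
      then show "(1 - t) * K \<le> A\<^sup>2"
        using bound[of "1 - t"] 2 by (simp add: mult.assoc mult.commute)
    qed
    with 2 show ?thesis by simp
  next
    case 3
    define s where "s = A + B"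
    define t where "t = A / s"
    have "0 < s"
      using 3 unfolding s_def by simp
    have t: "0 \<le> t" "t \<le> 1" "1 - t = B / s"
      using 3 \<open>0 < s\<close> unfolding t_def s_def by (auto simp: field_simps)
    have "t * (1 - t) * K = A * B * K / s\<^sup>2"
      unfolding t(3) unfolding t_def by (simp add: power2_eq_square)
    moreover have "(1 - t) * A\<^sup>2 + t * B\<^sup>2 = A * B"
      using \<open>0 < s\<close> unfolding t(3) unfolding t_def
      by (simp add: field_simps power2_eq_square) (simp add: s_def algebra_simps)
    ultimately have "A * B * K \<le> A * B * s\<^sup>2"
      using bound[OF t(1,2)] \<open>0 < s\<close> by (simp add: divide_le_eq)
    then show ?thesis
      using 3 unfolding s_def by (simp add: mult_le_cancel_left_pos)
  qed
qed

(* In the plane, a is at most the distance from (u0, sqrt \<alpha>) to (u1, - sqrt \<beta>),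
   hence at most the length of the broken line through (w, 0). *)
lemma diff_le_sqrt_add_sqrt:
  fixes a u0 u1 w \<alpha> \<beta> :: real
  assumes "0 \<le> \<alpha>" "0 \<le> \<beta>"
    and "\<And>t. 0 \<le> t \<Longrightarrow> t \<le> 1 \<Longrightarrow> t * (1 - t) * (a\<^sup>2 - (u0 - u1)\<^sup>2) \<le> (1 - t) * \<alpha> + t * \<beta>"
  shows "a \<le> sqrt ((w - u0)\<^sup>2 + \<alpha>) + sqrt ((w - u1)\<^sup>2 + \<beta>)"
proof (cases "a \<le> 0")
  case True
  moreover have "0 \<le> sqrt ((w - u0)\<^sup>2 + \<alpha>)" "0 \<le> sqrt ((w - u1)\<^sup>2 + \<beta>)"
    using assms(1,2) by simp_all
  ultimately show ?thesis by linarith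
next
  case False
  have "a\<^sup>2 \<le> ((w - u0) + (u1 - w))\<^sup>2 + (sqrt \<alpha> + sqrt \<beta>)\<^sup>2"
    using le_sum_squared_of_interpolation_bound[of "sqrt \<alpha>" "sqrt \<beta>" "a\<^sup>2 - (u0 - u1)\<^sup>2"] assms
    by (simp add: power2_commute)
  then have "a \<le> sqrt (((w - u0) + (u1 - w))\<^sup>2 + (sqrt \<alpha> + sqrt \<beta>)\<^sup>2)"
    by (rule real_le_rsqrt)
  also have "\<dots> \<le> sqrt ((w - u0)\<^sup>2 + (sqrt \<alpha>)\<^sup>2) + sqrt ((u1 - w)\<^sup>2 + (sqrt \<beta>)\<^sup>2)"
    by (rule real_sqrt_sum_squares_triangle_ineq)
  also have "\<dots> = sqrt ((w - u0)\<^sup>2 + \<alpha>) + sqrt ((w - u1)\<^sup>2 + \<beta>)"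
    using assms(1,2) by (simp add: power2_commute)
  finally show ?thesis .
qed

lemma sqrt_dist_lipschitz:
  fixes u c :: real
  assumes "0 \<le> c"
  shows "1-lipschitz_on UNIV (\<lambda>w. sqrt ((w - u)\<^sup>2 + c))"
proof -
  have le: "sqrt ((w - u)\<^sup>2 + c) \<le> sqrt ((w' - u)\<^sup>2 + c) + \<bar>w - w'\<bar>" for w w'
    using real_sqrt_sum_squares_triangle_ineq[of "w' - u" "w - w'" "sqrt c" 0] assms by simp
  show ?thesis
  proof (rule lipschitz_onI)
    fix x y :: real
    show "dist (sqrt ((x - u)\<^sup>2 + c)) (sqrt ((y - u)\<^sup>2 + c)) \<le> 1 * dist x y"
      using le[of x y] le[of y x] by (simp add: dist_real_def abs_minus_commute[of y x] abs_le_iff)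
  qed simp
qed

lemma ex_lipschitz_between:
  fixes l h :: "'i \<Rightarrow> 'a::metric_space \<Rightarrow> real"
  assumes "0 \<le> L"
    and lip: "\<And>i. i \<in> I \<Longrightarrow> L-lipschitz_on UNIV (l i)"
    and le: "\<And>i j w. i \<in> I \<Longrightarrow> j \<in> I \<Longrightarrow> l i w \<le> h j w"
  shows "\<exists>g. L-lipschitz_on UNIV g \<and> (\<forall>i\<in>I. \<forall>w. l i w \<le> g w \<and> g w \<le> h i w)"
proof (cases "I = {}")
  case True
  then show ?thesis
    using \<open>0 \<le> L\<close> by (intro exI[of _ "\<lambda>_. 0"]) (simp add: lipschitz_on_def)
next
  case False
  then obtain j where "j \<in> I" by blast
  define g where "g w = (SUP i\<in>I. l i w)" for w
  have bdd: "bdd_above ((\<lambda>i. l i w) ` I)" for w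
    using le[OF _ \<open>j \<in> I\<close>] by (intro bdd_aboveI2)
  have lower: "l i w \<le> g w" if "i \<in> I" for i w
    unfolding g_def by (rule cSUP_upper[OF that bdd])
  have upper: "g w \<le> h i w" if "i \<in> I" for i w
    unfolding g_def by (rule cSUP_least[OF False]) (rule le[OF _ that])
  have one_sided: "g w \<le> g w' + L * dist w w'" for w w'
    unfolding g_def
  proof (rule cSUP_least[OF False])
    fix i
    assume i: "i \<in> I"
    have "l i w \<le> l i w' + L * dist w w'"
      using lipschitz_onD[OF lip[OF i], of w w'] by (simp add: dist_real_def abs_le_iff)
    also have "\<dots> \<le> g w' + L * dist w w'"
      using lower[OF i] by simp
    finally show "l i w \<le> (SUP i\<in>I. l i w') + L * dist w w'"
      unfolding g_def .
  qed
  have "L-lipschitz_on UNIV g"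
  proof (rule lipschitz_onI)
    fix x y :: 'a
    have "g x - g y \<le> L * dist x y" "g y - g x \<le> L * dist x y"
      using one_sided[of x y] one_sided[of y x] by (simp_all add: dist_commute)
    then show "dist (g x) (g y) \<le> L * dist x y"
      by (simp add: dist_real_def abs_le_iff)
  qed fact
  with lower upper show ?thesis by blast
qed

definition interpolation_bound :: "(real \<times> real \<Rightarrow> ereal) \<Rightarrow> bool" where
  "interpolation_bound \<phi> \<longleftrightarrow>
    (\<forall>y0 y1 p0 p1 t. \<phi> y0 = ereal p0 \<longrightarrow> \<phi> y1 = ereal p1 \<longrightarrow> 0 \<le> t \<longrightarrow> t \<le> 1 \<longrightarrow>
      (1 - t) * p0 + t * p1 \<le> t * (1 - t) * cst y0 y1)"

lemma interpolation_boundI: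
  assumes "\<And>y0 y1 p0 p1 t. \<phi> y0 = ereal p0 \<Longrightarrow> \<phi> y1 = ereal p1 \<Longrightarrow> 0 \<le> t \<Longrightarrow> t \<le> 1 \<Longrightarrow>
      (1 - t) * p0 + t * p1 \<le> t * (1 - t) * cst y0 y1"
  shows "interpolation_bound \<phi>"
  using assms unfolding interpolation_bound_def by blast

lemma interpolation_boundD:
  assumes "interpolation_bound \<phi>" "\<phi> y0 = ereal p0" "\<phi> y1 = ereal p1" "0 \<le> t" "t \<le> 1"
  shows "(1 - t) * p0 + t * p1 \<le> t * (1 - t) * cst y0 y1"
  using assms unfolding interpolation_bound_def by blast

lemma interpolation_bound_iff:
  fixes \<phi> :: "real \<times> real \<Rightarrow> ereal"
  assumes nonpos: "\<And>y. \<phi> y \<le> 0"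
  shows "(\<forall>y0 y1 t. 0 \<le> t \<and> t \<le> 1 \<longrightarrow>
            ereal (1 - t) * \<phi> y0 + ereal t * \<phi> y1 \<le> ereal (t * (1 - t) * cst y0 y1))
         \<longleftrightarrow> interpolation_bound \<phi>"
proof
  assume H: "\<forall>y0 y1 t. 0 \<le> t \<and> t \<le> 1 \<longrightarrow>
            ereal (1 - t) * \<phi> y0 + ereal t * \<phi> y1 \<le> ereal (t * (1 - t) * cst y0 y1)"
  show "interpolation_bound \<phi>"
  proof (rule interpolation_boundI)
    fix y0 y1 p0 p1 and t :: real
    assume "\<phi> y0 = ereal p0" "\<phi> y1 = ereal p1" "0 \<le> t" "t \<le> 1"
    with H[rule_format, of t y0 y1] show "(1 - t) * p0 + t * p1 \<le> t * (1 - t) * cst y0 y1"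
      by simp
  qed
next
  assume bound: "interpolation_bound \<phi>"
  show "\<forall>y0 y1 t. 0 \<le> t \<and> t \<le> 1 \<longrightarrow>
          ereal (1 - t) * \<phi> y0 + ereal t * \<phi> y1 \<le> ereal (t * (1 - t) * cst y0 y1)"
  proof (intro allI impI)
    fix y0 y1 and t :: real
    assume "0 \<le> t \<and> t \<le> 1"
    then consider "t = 0" | "t = 1" | "0 < t" "t < 1"
      by linarith
    then show "ereal (1 - t) * \<phi> y0 + ereal t * \<phi> y1 \<le> ereal (t * (1 - t) * cst y0 y1)"
    proof cases
      case 1
      then show ?thesis using nonpos[of y0] by (simp add: zero_ereal_def[symmetric])
    next
      case 2
      then show ?thesis using nonpos[of y1] by (simp add: zero_ereal_def[symmetric])
    next
      case 3
      then show ?thesis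
        using nonpos[of y0] nonpos[of y1] interpolation_boundD[OF bound, of y0 _ y1 _ t]
        by (cases "\<phi> y0"; cases "\<phi> y1") auto
    qed
  qed
qed

lemma dominated_imp_interpolation_bound:
  assumes G: "maximal_monotone G" and dom: "\<And>y. \<phi> y \<le> phiG G y"
  shows "interpolation_bound \<phi>"
proof (rule interpolation_boundI)
  fix y0 y1 p0 p1 and t :: real
  assume \<phi>: "\<phi> y0 = ereal p0" "\<phi> y1 = ereal p1" and t: "0 \<le> t" "t \<le> 1"
  obtain x where x: "x \<in> G" "cst x ((1 - t) *\<^sub>R y0 + t *\<^sub>R y1) \<le> 0"
    using maximal_monotone_ex_cst_nonpos[OF G] by blast
  have "ereal p0 \<le> ereal (cst x y0)" "ereal p1 \<le> ereal (cst x y1)"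
    using dom[of y0] dom[of y1] phiG_le_cst[OF x(1)] \<phi> by (metis order_trans)+
  then have "(1 - t) * p0 + t * p1 \<le> (1 - t) * cst x y0 + t * cst x y1"
    using t by (intro add_mono mult_left_mono) auto
  also have "\<dots> \<le> t * (1 - t) * cst y0 y1"
    using x(2) unfolding cst_convex_combination by simp
  finally show "(1 - t) * p0 + t * p1 \<le> t * (1 - t) * cst y0 y1" .
qed

lemma ereal_le_phiG_rot_graph:
  assumes "p \<le> 0" and close: "\<And>w. \<bar>g w - rot_v y\<bar> \<le> sqrt ((w - rot_u y)\<^sup>2 - 4 * p)"
  shows "ereal p \<le> phiG (rot_graph g) y"
  unfolding phiG_def
proof (rule INF_greatest)
  fix x
  assume "x \<in> rot_graph g"
  then have cst_x: "4 * cst x y = (rot_u x - rot_u y)\<^sup>2 - (g (rot_u x) - rot_v y)\<^sup>2"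
    unfolding rot_graph_def cst_rot by simp
  have "0 \<le> (rot_u x - rot_u y)\<^sup>2 - 4 * p"
    using \<open>p \<le> 0\<close> zero_le_power2[of "rot_u x - rot_u y"] by linarith
  moreover have "\<bar>g (rot_u x) - rot_v y\<bar>\<^sup>2 \<le> (sqrt ((rot_u x - rot_u y)\<^sup>2 - 4 * p))\<^sup>2"
    using close by (intro power_mono) auto
  ultimately show "ereal p \<le> ereal (cst x y)"
    using cst_x by simp
qed

lemma interpolation_bound_imp_rot_v_le:
  assumes bound: "interpolation_bound \<phi>"
    and \<phi>: "\<phi> y = ereal p" "\<phi> y' = ereal p'" and "p \<le> 0" "p' \<le> 0"
  shows "rot_v y - sqrt ((w - rot_u y)\<^sup>2 - 4 * p) \<le> rot_v y' + sqrt ((w - rot_u y')\<^sup>2 - 4 * p')"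
proof -
  have rot: "(rot_v y - rot_v y')\<^sup>2 - (rot_u y - rot_u y')\<^sup>2 = - 4 * cst y y'"
    using cst_rot[of y y'] by simp
  have "t * (1 - t) * ((rot_v y - rot_v y')\<^sup>2 - (rot_u y - rot_u y')\<^sup>2)
      \<le> (1 - t) * (- 4 * p) + t * (- 4 * p')" if "0 \<le> t" "t \<le> 1" for t
  proof -
    have "t * (1 - t) * ((rot_v y - rot_v y')\<^sup>2 - (rot_u y - rot_u y')\<^sup>2)
        = - 4 * (t * (1 - t) * cst y y')"
      unfolding rot by simp
    also have "\<dots> \<le> - 4 * ((1 - t) * p + t * p')"
      using interpolation_boundD[OF bound \<phi> that] by simp
    also have "\<dots> = (1 - t) * (- 4 * p) + t * (- 4 * p')"
      by (simp add: algebra_simps)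
    finally show ?thesis .
  qed
  then show ?thesis
    using diff_le_sqrt_add_sqrt[of "- 4 * p" "- 4 * p'" "rot_v y - rot_v y'" "rot_u y" "rot_u y'" w]
      \<open>p \<le> 0\<close> \<open>p' \<le> 0\<close> by simp
qed

lemma interpolation_bound_imp_dominated:
  fixes \<phi> :: "real \<times> real \<Rightarrow> ereal"
  assumes nonpos: "\<And>y. \<phi> y \<le> 0" and bound: "interpolation_bound \<phi>"
  shows "\<exists>G. maximal_monotone G \<and> (\<forall>y. \<phi> y \<le> phiG G y)"
proof -
  define P where "P = {y. \<phi> y \<noteq> -\<infinity>}"
  define p where "p y = real_of_ereal (\<phi> y)" for y
  have p: "\<phi> y = ereal (p y)" "p y \<le> 0" if "y \<in> P" for y
    using that nonpos[of y] unfolding P_def p_def by (cases "\<phi> y"; simp)+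
  define R where "R y w = sqrt ((w - rot_u y)\<^sup>2 - 4 * p y)" for y w
  have R_lipschitz: "1-lipschitz_on UNIV (\<lambda>w. rot_v y - R y w)" if "y \<in> P" for y
  proof -
    have "1-lipschitz_on UNIV (R y)"
      unfolding R_def using sqrt_dist_lipschitz[of "- 4 * p y"] p(2)[OF that] by simp
    then show ?thesis
      using lipschitz_on_diff[OF lipschitz_on_constant] by fastforce
  qed
  obtain g where g: "1-lipschitz_on UNIV g"
    and between: "\<And>y w. y \<in> P \<Longrightarrow> rot_v y - R y w \<le> g w \<and> g w \<le> rot_v y + R y w"
    using ex_lipschitz_between[of 1 P "\<lambda>y w. rot_v y - R y w" "\<lambda>y w. rot_v y + R y w"]
      R_lipschitz interpolation_bound_imp_rot_v_le[OF bound p(1) p(1) p(2) p(2)]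
    unfolding R_def by auto
  have "\<phi> y \<le> phiG (rot_graph g) y" for y
  proof (cases "y \<in> P")
    case False
    then show ?thesis unfolding P_def by simp
  next
    case True
    have "\<bar>g w - rot_v y\<bar> \<le> R y w" for w
      using between[OF True, of w] by (simp add: abs_le_iff)
    then show ?thesis
      using p[OF True] ereal_le_phiG_rot_graph unfolding R_def by simp
  qed
  with maximal_monotone_rot_graph[OF g] show ?thesis by blast
qed

lemma interpolation_bound_convex_combination:
  assumes "\<And>y. \<phi>1 y \<le> 0" "\<And>y. \<phi>2 y \<le> 0"
    and bound1: "interpolation_bound \<phi>1" and bound2: "interpolation_bound \<phi>2"
    and a: "0 < a" "a < 1"
  shows "interpolation_bound (\<lambda>y. ereal a * \<phi>1 y + ereal (1 - a) * \<phi>2 y)"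
proof (rule interpolation_boundI)
  fix y0 y1 q0 q1 and t :: real
  assume q: "ereal a * \<phi>1 y0 + ereal (1 - a) * \<phi>2 y0 = ereal q0"
    "ereal a * \<phi>1 y1 + ereal (1 - a) * \<phi>2 y1 = ereal q1" and t: "0 \<le> t" "t \<le> 1"
  have finite_parts: "\<exists>p p'. \<phi>1 y = ereal p \<and> \<phi>2 y = ereal p' \<and> q = a * p + (1 - a) * p'"
    if "ereal a * \<phi>1 y + ereal (1 - a) * \<phi>2 y = ereal q" for y q
    using that assms(1,2)[of y] a by (cases "\<phi>1 y"; cases "\<phi>2 y") auto
  obtain p0 p0' p1 p1' where
    p: "\<phi>1 y0 = ereal p0" "\<phi>2 y0 = ereal p0'" "\<phi>1 y1 = ereal p1" "\<phi>2 y1 = ereal p1'"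
    and q_eq: "q0 = a * p0 + (1 - a) * p0'" "q1 = a * p1 + (1 - a) * p1'"
    using finite_parts[OF q(1)] finite_parts[OF q(2)] by blast
  have "a * ((1 - t) * p0 + t * p1) + (1 - a) * ((1 - t) * p0' + t * p1')
      \<le> a * (t * (1 - t) * cst y0 y1) + (1 - a) * (t * (1 - t) * cst y0 y1)"
    using interpolation_boundD[OF bound1 p(1,3) t] interpolation_boundD[OF bound2 p(2,4) t] a
    by (intro add_mono mult_left_mono) auto
  then show "(1 - t) * q0 + t * q1 \<le> t * (1 - t) * cst y0 y1"
    unfolding q_eq by (simp add: algebra_simps)
qed

lemma dominated_iff_interpolation_bound:
  fixes \<phi> :: "real \<times> real \<Rightarrow> ereal"
  assumes "\<And>y. \<phi> y \<le> 0"
  shows "(\<exists>G. maximal_monotone G \<and> (\<forall>y. \<phi> y \<le> phiG G y)) \<longleftrightarrow> interpolation_bound \<phi>"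
  using assms dominated_imp_interpolation_bound interpolation_bound_imp_dominated by blast

lemma dominated_set_convex:
  assumes "\<phi>1 \<in> dominated_set" "\<phi>2 \<in> dominated_set" "0 \<le> a" "a \<le> 1"
  shows "(\<lambda>y. ereal a * \<phi>1 y + ereal (1 - a) * \<phi>2 y) \<in> dominated_set"
proof -
  consider "a = 0" | "a = 1" | "0 < a" "a < 1"
    using assms(3,4) by linarith
  then show ?thesis
  proof cases
    case 1
    then show ?thesis using assms(2) by (simp add: zero_ereal_def[symmetric])
  next
    case 2
    then show ?thesis using assms(1) by (simp add: zero_ereal_def[symmetric])
  next
    case 3
    define \<psi> where "\<psi> y = ereal a * \<phi>1 y + ereal (1 - a) * \<phi>2 y" for y
    have \<phi>: "\<phi>1 \<in> borel_measurable borel" "\<phi>2 \<in> borel_measurable borel"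
      "\<And>y. \<phi>1 y \<le> 0" "\<And>y. \<phi>2 y \<le> 0"
      "interpolation_bound \<phi>1" "interpolation_bound \<phi>2"
      using assms(1,2) dominated_iff_interpolation_bound unfolding dominated_set_def by auto
    have "\<psi> \<in> borel_measurable borel"
      unfolding \<psi>_def using \<phi>(1,2) by measurable
    moreover have "\<psi> y \<le> 0" for y
      unfolding \<psi>_def using \<phi>(3,4)[of y] 3
      by (cases "\<phi>1 y"; cases "\<phi>2 y") (auto simp: mult_nonneg_nonpos add_nonpos_nonpos)
    moreover have "interpolation_bound \<psi>"
      unfolding \<psi>_def using interpolation_bound_convex_combination[OF \<phi>(3,4,5,6) 3] .
    ultimately have "\<psi> \<in> dominated_set"
      using dominated_iff_interpolation_bound[of \<psi>] unfolding dominated_set_def by blast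
    then show ?thesis
      unfolding \<psi>_def .
  qed
qed

theorem lemma9:
  fixes \<phi> :: "real \<times> real \<Rightarrow> ereal"
  assumes "\<phi> \<in> borel_measurable borel"
    and "\<forall>y. \<phi> y \<le> 0"
  shows "((\<exists>G. maximal_monotone G \<and> (\<forall>y. \<phi> y \<le> phiG G y)) \<longleftrightarrow>
           (\<forall>y0 y1 t. 0 \<le> t \<and> t \<le> 1 \<longrightarrow>
              ereal (1 - t) * \<phi> y0 + ereal t * \<phi> y1 \<le> ereal (t * (1 - t) * cst y0 y1))) \<and>
         (\<forall>\<phi>1\<in>dominated_set. \<forall>\<phi>2\<in>dominated_set. \<forall>a::real. 0 \<le> a \<and> a \<le> 1 \<longrightarrow>
           (\<lambda>y. ereal a * \<phi>1 y + ereal (1 - a) * \<phi>2 y) \<in> dominated_set)"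
  using dominated_iff_interpolation_bound[of \<phi>] interpolation_bound_iff[of \<phi>] assms(2)
    dominated_set_convex by auto

end
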